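(* Let $q$ be a prime power. For all positive integers $d,t$ with $d<q$ and $t+1<q$, an optimum $(d,t)$-CDA$((d+1)q^t;q+t-1,q)$ exists. Moreover, if $q\ge4$ is a power of $2$, then an optimum $(d,2)$-CDA$((d+1)q^2;2q+3,q)$ exists for every positive integer $d<q$.
   Context: Consecutive $t$-way interaction in an $N\times k$ array $A=(a_{ij})$ over a $v$-set $V$: $T=\{(i,x_i),\dots,(i+t-1,x_{i+t-1})\}$, $1\le i\le k-t+1$, $x_r\in V$; $\rho(A,T)=\{r: a_{r,j}=x_j\ \forall (j,x_j)\in T\}$, $\rho(A,\mathcal T)=\bigcup_{T\in\mathcal T}\rho(A,T)$. A $(d,t)$-CDA$(N;k,v)$ is an $N\times k$ array over $V$ in which every $t$ consecutive columns contain every $t$-tuple at least once, and such that for every set $\mathcal T$ of exactly $d$ distinct consecutive $t$-way interactions and every consecutive $t$-way interaction $T$: $\rho(A,T)\subseteq\rho(A,\mathcal T)$ iff $T\in\mathcal T$. It is optimum if $N=(d+1)v^t$. *)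

theory Defs
  imports "HOL-Computational_Algebra.Primes"
begin

text \<open>A consecutive t-way interaction {(i,x_i),...,(i+t-1,x_{i+t-1})} is encoded as the pair
(i, [x_i,...,x_{i+t-1}]) with i + t \<le> k (0-indexed columns).\<close>

definition cinteractions :: "nat \<Rightarrow> nat \<Rightarrow> nat \<Rightarrow> (nat \<times> nat list) set" where
  "cinteractions k t v = {(i, xs). i + t \<le> k \<and> length xs = t \<and> set xs \<subseteq> {0..<v}}"

definition rho :: "nat \<Rightarrow> (nat \<Rightarrow> nat \<Rightarrow> nat) \<Rightarrow> nat \<times> nat list \<Rightarrow> nat set" where
  "rho N A T = {r. r < N \<and> (\<forall>j < length (snd T). A r (fst T + j) = snd T ! j)}"

definition rho_set :: "nat \<Rightarrow> (nat \<Rightarrow> nat \<Rightarrow> nat) \<Rightarrow> (nat \<times> nat list) set \<Rightarrow> nat set" where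
  "rho_set N A S = (\<Union>T\<in>S. rho N A T)"

definition is_CDA :: "nat \<Rightarrow> nat \<Rightarrow> nat \<Rightarrow> nat \<Rightarrow> nat \<Rightarrow> (nat \<Rightarrow> nat \<Rightarrow> nat) \<Rightarrow> bool" where
  "is_CDA d t N k v A \<longleftrightarrow>
     (\<forall>r < N. \<forall>j < k. A r j < v) \<and>
     (\<forall>T \<in> cinteractions k t v. rho N A T \<noteq> {}) \<and>
     (\<forall>S. S \<subseteq> cinteractions k t v \<and> card S = d \<longrightarrow>
        (\<forall>T \<in> cinteractions k t v. rho N A T \<subseteq> rho_set N A S \<longleftrightarrow> T \<in> S))"

definition optimum_CDA :: "nat \<Rightarrow> nat \<Rightarrow> nat \<Rightarrow> nat \<Rightarrow> nat \<Rightarrow> (nat \<Rightarrow> nat \<Rightarrow> nat) \<Rightarrow> bool" where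
  "optimum_CDA d t N k v A \<longleftrightarrow> is_CDA d t N k v A \<and> N = (d + 1) * v ^ t"

definition prime_power :: "nat \<Rightarrow> bool" where
  "prime_power q \<longleftrightarrow> (\<exists>p n. prime p \<and> n > 0 \<and> q = p ^ n)"

end

theory Submission
  imports "HOL-Algebra.Algebraic_Closure" "HOL-Number_Theory.Residues" Defs
begin

text \<open>
  Let \<open>F\<close> be the field with \<open>q\<close> elements, obtained as the fixed points of the Frobenius map
  \<open>x \<mapsto> x\<^sup>q\<close> in an algebraic closure of \<open>\<int>/p\<close>. Fix a set \<open>C\<close> of \<open>d + 1\<close> field elements
  and take as rows all polynomials of degree \<open>t\<close> with leading coefficient in \<open>C\<close>, so there are
  \<open>(d + 1) q\<^sup>t\<close> rows; column \<open>j\<close> evaluates them at a point \<open>P\<^sub>j\<close> of the projective line.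
  If any \<open>t\<close> consecutive points are distinct, a row with given leading coefficient is determined
  by its values on a window, hence every interaction is covered by at least \<open>d + 1\<close> rows (one for
  each \<open>c \<in> C\<close>). If moreover any two windows together see enough distinct points to determine a
  whole row, two distinct interactions share at most one row, and a counting argument yields the
  detecting property. For the first family the points are \<open>0, 1, \<dots>, q - 1, 0, 1, \<dots>\<close>; for
  \<open>q = 2\<^sup>m\<close> and \<open>t = 2\<close> they run once around the projective line with step 1 and then once with
  step 2, and quadratics \<open>c x\<^sup>2 + a x + b\<close> are determined by three points, including \<open>\<infinity>\<close>,
  because squaring is injective in characteristic 2.
\<close>

section \<open>Finite fields\<close>

context cring
begin

lemma binomial_term_pascal:
  assumes x: "x \<in> carrier R" and y: "y \<in> carrier R"
  shows "[(Suc n choose Suc k)] \<cdot> (x [^] Suc k \<otimes> y [^] (n - k))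
       = [(n choose k)] \<cdot> (x [^] k \<otimes> y [^] (n - k)) \<otimes> x
         \<oplus> [(n choose Suc k)] \<cdot> (x [^] Suc k \<otimes> y [^] (n - Suc k)) \<otimes> y"
proof -
  have "[(n choose Suc k)] \<cdot> (x [^] Suc k \<otimes> y [^] (n - Suc k)) \<otimes> y
      = [(n choose Suc k)] \<cdot> (x [^] Suc k \<otimes> y [^] (n - k))"
  proof (cases "k < n")
    case True
    then have "y [^] (n - Suc k) \<otimes> y = y [^] (n - k)"
      using y by (simp add: Suc_diff_Suc flip: nat_pow_Suc)
    then show ?thesis using x y by (simp add: add_pow_ldistr m_assoc)
  qed (use x y in \<open>simp add: binomial_eq_0\<close>)
  moreover have "[(n choose k)] \<cdot> (x [^] k \<otimes> y [^] (n - k)) \<otimes> x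
      = [(n choose k)] \<cdot> (x [^] Suc k \<otimes> y [^] (n - k))"
    using x y by (simp add: add_pow_ldistr add_pow_rdistr m_ac nat_pow_Suc)
  ultimately show ?thesis using x y by (simp add: add.nat_pow_mult)
qed

lemma binomial_expansion:
  assumes x: "x \<in> carrier R" and y: "y \<in> carrier R"
  shows "(x \<oplus> y) [^] n = (\<Oplus>k\<in>{..n}. [(n choose k)] \<cdot> (x [^] k \<otimes> y [^] (n - k)))"
proof (induction n)
  case 0
  then show ?case using x y by simp
next
  case (Suc n)
  define f where "f m k = [(m choose k)] \<cdot> (x [^] k \<otimes> y [^] (m - k))" for m k
  have f_closed: "f m k \<in> carrier R" for m k using x y by (simp add: f_def)
  then have f_Pi: "f m \<in> A \<rightarrow> carrier R" for m A by simp
  have pascal: "f (Suc n) (Suc k) = f n k \<otimes> x \<oplus> f n (Suc k) \<otimes> y" for k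
    using binomial_term_pascal[OF x y, of n k] by (simp add: f_def)
  have "(\<Oplus>k\<in>{..Suc n}. f (Suc n) k) = (\<Oplus>k\<in>{..n}. f (Suc n) (Suc k)) \<oplus> f (Suc n) 0"
    using finsum_Suc2[OF f_Pi] .
  also have "\<dots> = (\<Oplus>k\<in>{..n}. f n k \<otimes> x) \<oplus> ((\<Oplus>k\<in>{..n}. f n (Suc k) \<otimes> y) \<oplus> f n 0 \<otimes> y)"
  proof -
    have "f (Suc n) 0 = f n 0 \<otimes> y" using x y by (simp add: f_def m_ac nat_pow_Suc add_pow_ldistr)
    moreover have "(\<Oplus>k\<in>{..n}. f n k \<otimes> x \<oplus> f n (Suc k) \<otimes> y)
        = (\<Oplus>k\<in>{..n}. f n k \<otimes> x) \<oplus> (\<Oplus>k\<in>{..n}. f n (Suc k) \<otimes> y)"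
      using x y f_closed by (intro finsum_addf) auto
    ultimately show ?thesis
      using x y f_closed by (simp add: pascal a_assoc finsum_closed)
  qed
  also have "(\<Oplus>k\<in>{..n}. f n (Suc k) \<otimes> y) \<oplus> f n 0 \<otimes> y = (\<Oplus>k\<in>{..Suc n}. f n k \<otimes> y)"
    using y f_closed by (intro finsum_Suc2[symmetric]) auto
  also have "\<dots> = (\<Oplus>k\<in>{..n}. f n k \<otimes> y)"
    using y f_closed by (simp add: f_def binomial_eq_0)
  also have "(\<Oplus>k\<in>{..n}. f n k \<otimes> x) \<oplus> (\<Oplus>k\<in>{..n}. f n k \<otimes> y) = (x \<oplus> y) [^] n \<otimes> (x \<oplus> y)"
    using x y f_Pi by (simp add: Suc finsum_ldistr r_distr f_def finsum_closed)
  finally show ?case by (simp add: f_def)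
qed

lemma add_pow_eq_zero_if_char_dvd:
  assumes char: "[p] \<cdot> \<one> = \<zero>" and z: "z \<in> carrier R" and "p dvd (m::nat)"
  shows "[m] \<cdot> z = \<zero>"
proof -
  obtain c where m: "m = p * c" using \<open>p dvd m\<close> by blast
  have "[p] \<cdot> z = ([p] \<cdot> \<one>) \<otimes> z" using z add_pow_ldistr[of \<one> z p] by simp
  then have "[p] \<cdot> z = \<zero>" using char z by simp
  moreover have "[m] \<cdot> z = [c] \<cdot> ([p] \<cdot> z)" using z by (simp add: m add.nat_pow_pow)
  ultimately show ?thesis by simp
qed

lemma frobenius_add:
  fixes p :: nat
  assumes p: "prime p" and char: "[p] \<cdot> \<one> = \<zero>"
    and x: "x \<in> carrier R" and y: "y \<in> carrier R"
  shows "(x \<oplus> y) [^] p = x [^] p \<oplus> y [^] p"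
proof -
  define f where "f k = [(p choose k)] \<cdot> (x [^] k \<otimes> y [^] (p - k))" for k
  have f_Pi: "f \<in> A \<rightarrow> carrier R" for A using x y by (auto simp: f_def)
  obtain m where p_eq: "p = Suc (Suc m)"
    using prime_ge_2_nat[OF p] by (metis add_2_eq_Suc le_Suc_ex)
  have inner: "(\<Oplus>k\<in>{..m}. f (Suc k)) = \<zero>"
  proof (rule add.finprod_one_eqI)
    fix k assume "k \<in> {..m}"
    then have "p dvd (p choose Suc k)" using p p_eq by (intro dvd_choose_prime) auto
    then show "f (Suc k) = \<zero>"
      unfolding f_def using x y by (intro add_pow_eq_zero_if_char_dvd[OF char]) auto
  qed
  have "(x \<oplus> y) [^] p = (\<Oplus>k\<in>{..Suc (Suc m)}. f k)"
    unfolding f_def p_eq by (rule binomial_expansion[OF x y])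
  also have "\<dots> = f (Suc (Suc m)) \<oplus> (\<Oplus>k\<in>{..Suc m}. f k)"
    by (rule finsum_Suc[OF f_Pi])
  also have "(\<Oplus>k\<in>{..Suc m}. f k) = (\<Oplus>k\<in>{..m}. f (Suc k)) \<oplus> f 0"
    by (rule finsum_Suc2[OF f_Pi])
  finally show ?thesis using inner x y p_eq by (simp add: f_def)
qed

lemma frobenius_pow_add:
  fixes p :: nat
  assumes "prime p" and "[p] \<cdot> \<one> = \<zero>" and "x \<in> carrier R" and "y \<in> carrier R"
  shows "(x \<oplus> y) [^] (p ^ n) = x [^] (p ^ n) \<oplus> y [^] (p ^ n)"
proof (induction n)
  case (Suc n)
  have "(x \<oplus> y) [^] (p ^ Suc n) = ((x \<oplus> y) [^] (p ^ n)) [^] p"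
    using assms by (simp add: nat_pow_pow mult.commute)
  also have "\<dots> = (x [^] (p ^ n)) [^] p \<oplus> (y [^] (p ^ n)) [^] p"
    using Suc frobenius_add assms by simp
  finally show ?case using assms by (simp add: nat_pow_pow mult.commute)
qed (use assms in simp)

end

lemma (in domain) square_inj_char_two:
  assumes char: "[(2::nat)] \<cdot> \<one> = \<zero>" and x: "x \<in> carrier R" and y: "y \<in> carrier R"
    and eq: "x \<otimes> x = y \<otimes> y"
  shows "x = y"
proof -
  have "(x \<ominus> y) [^] (2::nat) \<oplus> y [^] (2::nat) = (x \<ominus> y \<oplus> y) [^] (2::nat)"
    using frobenius_add[OF two_is_prime_nat char, of "x \<ominus> y" y] x y by simp
  also have "x \<ominus> y \<oplus> y = x" using x y by algebra
  finally have "(x \<ominus> y) \<otimes> (x \<ominus> y) \<oplus> y \<otimes> y = \<zero> \<oplus> y \<otimes> y"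
    using x y eq by (simp add: numeral_2_eq_2)
  then have "(x \<ominus> y) \<otimes> (x \<ominus> y) = \<zero>" using x y by (simp del: l_zero)
  then show ?thesis using x y integral by fastforce
qed

lemma (in ring_hom_ring) hom_add_pow:
  assumes "x \<in> carrier R"
  shows "h ([(n::nat)] \<cdot>\<^bsub>R\<^esub> x) = [n] \<cdot>\<^bsub>S\<^esub> h x"
  by (induction n) (use assms in \<open>simp_all add: hom_add\<close>)

lemma (in residues) add_pow_one: "[(n::nat)] \<cdot> \<one> = int n mod m"
proof (induction n)
  case (Suc n)
  have "[Suc n] \<cdot> \<one> = (int n mod m) \<oplus> (1 mod m)" using Suc one_cong by simp
  then show ?case by (simp add: add_cong ac_simps)
qed (simp add: res_zero_eq)

lemma (in field) subfield_frobenius_fixed_points: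
  fixes p :: nat
  assumes p: "prime p" and char: "[p] \<cdot> \<one> = \<zero>"
  shows "subfield {x \<in> carrier R. x [^] (p ^ n) = x} R"
proof -
  let ?q = "p ^ n"
  let ?K = "{x \<in> carrier R. x [^] ?q = x}"
  have sub: "subring ?K R"
  proof (rule subringI)
    fix h assume h: "h \<in> ?K"
    then have "h [^] ?q \<oplus> (\<ominus> h) [^] ?q = \<zero>"
      using frobenius_pow_add[OF p char, of h "\<ominus> h" n] prime_gt_0_nat[OF p]
      by (simp add: r_neg nat_pow_zero)
    then have "(\<ominus> h) [^] ?q = \<ominus> (h [^] ?q)"
      using h by (metis (no_types, lifting) a_inv_closed minus_equality nat_pow_closed a_comm mem_Collect_eq)
    then show "\<ominus> h \<in> ?K" using h by simp
  qed (auto simp: nat_pow_distrib frobenius_pow_add[OF p char])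
  show ?thesis
  proof (rule subfieldI'[OF sub])
    fix k assume k: "k \<in> ?K - {\<zero>}"
    then have k_unit: "k \<in> Units R" using field_Units by auto
    have "k \<otimes> inv k [^] ?q = k [^] ?q \<otimes> inv k [^] ?q" using k by simp
    also have "\<dots> = (k \<otimes> inv k) [^] ?q"
      using k k_unit by (intro nat_pow_distrib[symmetric]) auto
    finally have "k \<otimes> inv k [^] ?q = \<one>" using k_unit by simp
    then have "inv k = inv k [^] ?q" using k k_unit by (intro comm_inv_char) auto
    then show "inv k \<in> ?K" using k_unit by simp
  qed
qed

context domain
begin

definition frobenius_poly :: "nat \<Rightarrow> 'a list"
  where "frobenius_poly q = X [^]\<^bsub>poly_ring R\<^esub> q \<ominus>\<^bsub>poly_ring R\<^esub> X"

lemma frobenius_poly_closed: "frobenius_poly q \<in> carrier (poly_ring R)"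
proof -
  interpret P: domain "poly_ring R" using univ_poly_is_domain[OF carrier_is_subring] .
  show ?thesis using var_closed(1)[OF carrier_is_subring] by (simp add: frobenius_poly_def)
qed

lemma eval_frobenius_poly:
  assumes "x \<in> carrier R"
  shows "eval (frobenius_poly q) x = x [^] q \<ominus> x"
proof -
  interpret E: ring_hom_cring "poly_ring R" R "\<lambda>p. eval p x"
    using eval_cring_hom[OF carrier_is_subring assms] .
  show ?thesis
    using var_closed(1)[OF carrier_is_subring] assms
    by (simp add: frobenius_poly_def E.ring.hom_nat_pow eval_var)
qed

lemma degree_frobenius_poly:
  assumes "2 \<le> q"
  shows "degree (frobenius_poly q) = q"
proof -
  let ?P = "poly_ring R"
  interpret P: domain ?P using univ_poly_is_domain[OF carrier_is_subring] .
  have X: "X \<in> carrier ?P" using var_closed(1)[OF carrier_is_subring] .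
  have "frobenius_poly q = poly_add (monom \<one> q) (\<ominus>\<^bsub>?P\<^esub> X)"
    unfolding frobenius_poly_def a_minus_def
    by (simp add: univ_poly_add unitary_monom_eq_var_pow[OF carrier_is_subring])
  moreover have "polynomial (carrier R) (monom \<one> q)"
    using carrier_is_subring by (intro monom_is_polynomial) auto
  moreover have "polynomial (carrier R) (\<ominus>\<^bsub>?P\<^esub> X)"
    using X by (simp add: univ_poly_carrier)
  moreover have "degree (\<ominus>\<^bsub>?P\<^esub> X) = 1"
    using univ_poly_a_inv_degree[OF carrier_is_subring X] by (simp add: var_def)
  moreover have "degree (monom \<one> q) = q" by (simp add: monom_def)
  ultimately show ?thesis
    using poly_add_degree_eq[OF carrier_is_subring] assms by simp
qed

lemma frobenius_poly_shift:
  fixes p :: nat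
  assumes p: "prime p" and char: "[p] \<cdot> \<one> = \<zero>" and a: "a \<in> carrier R" "a [^] (p ^ n) = a"
  shows "frobenius_poly (p ^ n) = [\<one>, \<ominus> a] [^]\<^bsub>poly_ring R\<^esub> (p ^ n) \<ominus>\<^bsub>poly_ring R\<^esub> [\<one>, \<ominus> a]"
proof -
  let ?P = "poly_ring R"
  interpret P: domain ?P using univ_poly_is_domain[OF carrier_is_subring] .
  interpret C: ring_hom_ring R ?P poly_of_const
    using canonical_embedding_ring_hom[OF carrier_is_subring] by simp
  define u where "u = [\<one>, \<ominus> a]"
  define c where "c = poly_of_const a"
  have u: "u \<in> carrier ?P"
    unfolding u_def univ_poly_carrier[symmetric] polynomial_def using a by auto
  have c: "c \<in> carrier ?P" unfolding c_def using a by simp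
  have X: "X = u \<oplus>\<^bsub>?P\<^esub> c"
    using a by (cases "a = \<zero>") (simp_all add: u_def c_def poly_of_const_def var_def univ_poly_add l_neg)
  have char_P: "[p] \<cdot>\<^bsub>?P\<^esub> \<one>\<^bsub>?P\<^esub> = \<zero>\<^bsub>?P\<^esub>"
    using C.hom_add_pow[of \<one> p] char by simp
  have "c [^]\<^bsub>?P\<^esub> (p ^ n) = c" unfolding c_def using a by (simp flip: C.hom_nat_pow)
  then have "X [^]\<^bsub>?P\<^esub> (p ^ n) = u [^]\<^bsub>?P\<^esub> (p ^ n) \<oplus>\<^bsub>?P\<^esub> c"
    unfolding X using P.frobenius_pow_add[OF p char_P u c] by simp
  then show ?thesis
    unfolding frobenius_poly_def u_def[symmetric] using u c X
    by (simp add: P.minus_add P.a_ac P.minus_eq P.r_neg2)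
qed

text \<open>
  With \<open>u = X - a\<close> for a root \<open>a\<close>, \<open>X\<^sup>q - X = u (u\<^sup>q\<^sup>-\<^sup>1 - 1)\<close> and the cofactor is \<open>-1\<close> at \<open>a\<close>,
  so \<open>u\<^sup>2\<close> does not divide \<open>X\<^sup>q - X\<close>.
\<close>

lemma alg_mult_frobenius_poly_le_one:
  fixes p :: nat
  assumes p: "prime p" and char: "[p] \<cdot> \<one> = \<zero>" and "0 < n"
  shows "alg_mult (frobenius_poly (p ^ n)) a \<le> 1"
proof (rule ccontr)
  let ?P = "poly_ring R" and ?q = "p ^ n"
  interpret P: domain ?P using univ_poly_is_domain[OF carrier_is_subring] .
  define u where "u = [\<one>, \<ominus> a]"
  assume "\<not> alg_mult (frobenius_poly ?q) a \<le> 1"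
  then have mult: "2 \<le> alg_mult (frobenius_poly ?q) a" by simp
  then have a: "a \<in> carrier R" unfolding alg_mult_def by (auto split: if_splits)
  have "0 < alg_mult (frobenius_poly ?q) a" using mult by simp
  then have "is_root (frobenius_poly ?q) a"
    using alg_mult_gt_zero_iff_is_root[OF frobenius_poly_closed] by blast
  then have "a [^] ?q = a" using eval_frobenius_poly[OF a] a unfolding is_root_def by simp
  note shift = frobenius_poly_shift[OF p char a this, folded u_def]
  have u: "u \<in> carrier ?P" "u \<noteq> \<zero>\<^bsub>?P\<^esub>"
    unfolding u_def univ_poly_carrier[symmetric] polynomial_def using a by (auto simp: univ_poly_zero)
  obtain g where g: "g \<in> carrier ?P" and "frobenius_poly ?q = u [^]\<^bsub>?P\<^esub> (2::nat) \<otimes>\<^bsub>?P\<^esub> g"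
    using le_alg_mult_imp_pdivides[OF a frobenius_poly_closed mult]
    unfolding pdivides_def factor_def u_def by blast
  then have "frobenius_poly ?q = u \<otimes>\<^bsub>?P\<^esub> (u \<otimes>\<^bsub>?P\<^esub> g)"
    using u g by (simp add: numeral_2_eq_2 P.m_assoc)
  moreover have "u [^]\<^bsub>?P\<^esub> ?q = u \<otimes>\<^bsub>?P\<^esub> u [^]\<^bsub>?P\<^esub> (?q - 1)"
    using u prime_gt_0_nat[OF p] by (metis Suc_diff_1 P.nat_pow_Suc2 zero_less_power)
  then have "frobenius_poly ?q = u \<otimes>\<^bsub>?P\<^esub> (u [^]\<^bsub>?P\<^esub> (?q - 1) \<ominus>\<^bsub>?P\<^esub> \<one>\<^bsub>?P\<^esub>)"
    using shift u by (simp add: P.r_distr P.minus_eq P.r_minus)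
  ultimately have "u \<otimes>\<^bsub>?P\<^esub> (u \<otimes>\<^bsub>?P\<^esub> g) = u \<otimes>\<^bsub>?P\<^esub> (u [^]\<^bsub>?P\<^esub> (?q - 1) \<ominus>\<^bsub>?P\<^esub> \<one>\<^bsub>?P\<^esub>)"
    by simp
  then have cofactor: "u \<otimes>\<^bsub>?P\<^esub> g = u [^]\<^bsub>?P\<^esub> (?q - 1) \<ominus>\<^bsub>?P\<^esub> \<one>\<^bsub>?P\<^esub>"
    using P.m_lcancel[OF u(2,1)] u g by simp
  interpret E: ring_hom_cring ?P R "\<lambda>p. eval p a"
    using eval_cring_hom[OF carrier_is_subring a] .
  have u_root: "eval u a = \<zero>" using a by (simp add: u_def r_neg)
  have "0 < ?q - 1" using \<open>0 < n\<close> prime_gt_1_nat[OF p] one_less_power[of p n] by linarith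
  then have "eval (u [^]\<^bsub>?P\<^esub> (?q - 1) \<ominus>\<^bsub>?P\<^esub> \<one>\<^bsub>?P\<^esub>) a = \<ominus> \<one>"
    using u u_root by (simp add: E.ring.hom_nat_pow nat_pow_zero minus_eq)
  moreover have "eval (u \<otimes>\<^bsub>?P\<^esub> g) a = \<zero>" using u g u_root by simp
  ultimately have "\<zero> = \<ominus> \<one>" using cofactor by simp
  then show False by (metis a_inv_closed minus_minus minus_zero one_closed one_not_zero)
qed

end

lemma size_eq_card_set_mset:
  assumes "\<And>x. count M x \<le> 1"
  shows "size M = card (set_mset M)"
proof -
  have "size M = (\<Sum>x\<in>set_mset M. count M x)" by (rule size_multiset_overloaded_eq)
  also have "\<dots> = (\<Sum>x\<in>set_mset M. 1)"
  proof (rule sum.cong[OF refl])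
    fix x assume "x \<in> set_mset M"
    then have "0 < count M x" by simp
    then show "count M x = 1" using assms[of x] by linarith
  qed
  finally show ?thesis by simp
qed

lemma (in algebraically_closed) card_frobenius_fixed_points:
  fixes p :: nat
  assumes p: "prime p" and char: "[p] \<cdot> \<one> = \<zero>" and n: "0 < n"
  shows "finite {x \<in> carrier L. x [^] (p ^ n) = x}" and "card {x \<in> carrier L. x [^] (p ^ n) = x} = p ^ n"
proof -
  let ?f = "frobenius_poly (p ^ n)"
  have "p ^ 1 \<le> p ^ n" using n prime_gt_0_nat[OF p] by (intro power_increasing) auto
  then have "2 \<le> p ^ n" using prime_ge_2_nat[OF p] by simp
  then have "degree ?f = p ^ n" by (rule degree_frobenius_poly)
  then have "size (roots ?f) = p ^ n"
    using roots_over_carrier[OF frobenius_poly_closed] unfolding splitted_def by simp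
  moreover have "size (roots ?f) = card (set_mset (roots ?f))"
    using alg_mult_frobenius_poly_le_one[OF p char n] alg_mult_eq_count_roots[OF frobenius_poly_closed]
    by (intro size_eq_card_set_mset) metis
  moreover have "?f \<noteq> []"
  proof
    assume "?f = []"
    then have "degree ?f = 0" by simp
    then show False using \<open>degree ?f = p ^ n\<close> \<open>2 \<le> p ^ n\<close> by linarith
  qed
  then have "set_mset (roots ?f) = {x \<in> carrier L. x [^] (p ^ n) = x}"
    using roots_mem_iff_is_root[OF frobenius_poly_closed] eval_frobenius_poly
    unfolding is_root_def by auto
  ultimately show "finite {x \<in> carrier L. x [^] (p ^ n) = x}" "card {x \<in> carrier L. x [^] (p ^ n) = x} = p ^ n"
    by (metis finite_set_mset)+
qed

text \<open>The type is that of the carrier of the algebraic closure built in HOL-Algebra.\<close>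

lemma finite_field_exists:
  fixes p n :: nat
  assumes p: "prime p" and n: "0 < n"
  shows "\<exists>F :: ((int list \<times> nat) multiset \<Rightarrow> int) ring.
           field F \<and> finite (carrier F) \<and> card (carrier F) = p ^ n \<and> [p] \<cdot>\<^bsub>F\<^esub> \<one>\<^bsub>F\<^esub> = \<zero>\<^bsub>F\<^esub>"
proof -
  interpret residues_prime p "residue_ring (int p)"
    using p by unfold_locales (assumption, rule reflexive)
  define Z where "Z = residue_ring (int p)"
  have Z: "field Z" unfolding Z_def by (rule is_field)
  define L where "L = field.alg_closure Z"
  interpret L: algebraic_closure L "ring.indexed_const Z ` carrier Z"
    unfolding L_def by (rule field.alg_closureE(1)[OF Z])
  interpret H: ring_hom_ring Z L "ring.indexed_const Z"
    using ring_hom_ringI2[OF field.is_ring[OF Z] L.ring_axioms] field.alg_closureE(2)[OF Z]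
    unfolding L_def by simp
  have char_Z: "[p] \<cdot>\<^bsub>Z\<^esub> \<one>\<^bsub>Z\<^esub> = \<zero>\<^bsub>Z\<^esub>"
    unfolding Z_def using add_pow_one[of p] res_zero_eq by simp
  have char_L: "[p] \<cdot>\<^bsub>L\<^esub> \<one>\<^bsub>L\<^esub> = \<zero>\<^bsub>L\<^esub>"
    using H.hom_add_pow[of "\<one>\<^bsub>Z\<^esub>" p] char_Z by simp
  define K where "K = {x \<in> carrier L. x [^]\<^bsub>L\<^esub> (p ^ n) = x}"
  have "field (L\<lparr>carrier := K\<rparr>)"
    unfolding K_def using L.subfield_iff(2)[OF L.subfield_frobenius_fixed_points[OF p char_L]] .
  moreover have "[p] \<cdot>\<^bsub>L\<lparr>carrier := K\<rparr>\<^esub> \<one>\<^bsub>L\<^esub> = \<zero>\<^bsub>L\<^esub>"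
    using char_L by (simp add: add_pow_def nat_pow_def)
  ultimately show ?thesis
    using L.card_frobenius_fixed_points[OF p char_L n]
    by (intro exI[of _ "L\<lparr>carrier := K\<rparr>"]) (simp add: K_def)
qed

section \<open>A sufficient condition for detecting arrays\<close>

lemma rho_eq_on_window:
  assumes "r1 \<in> rho N A (i, xs)" "r2 \<in> rho N A (i, xs)" "j \<in> {i..<i + length xs}"
  shows "A r1 j = A r2 j"
proof -
  define m where "m = j - i"
  have "j = i + m" "m < length xs" using assms(3) by (auto simp: m_def)
  then show ?thesis using assms(1,2) by (auto simp: rho_def)
qed

lemma finite_rho: "finite (rho N A T)"
  by (simp add: rho_def)

lemma card_rho_Int_le_one:
  assumes two_windows: "\<And>i i' r1 r2. i < i' \<Longrightarrow> i' + t \<le> k \<Longrightarrow> r1 < N \<Longrightarrow> r2 < N \<Longrightarrow>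
        (\<And>j. j \<in> {i..<i + t} \<union> {i'..<i' + t} \<Longrightarrow> A r1 j = A r2 j) \<Longrightarrow> r1 = r2"
    and T: "T \<in> cinteractions k t v" and T': "T' \<in> cinteractions k t v" and "T \<noteq> T'"
  shows "card (rho N A T \<inter> rho N A T') \<le> 1"
proof -
  obtain i xs where T_eq: "T = (i, xs)" by (cases T)
  obtain i' xs' where T'_eq: "T' = (i', xs')" by (cases T')
  have len: "length xs = t" "length xs' = t" "i + t \<le> k" "i' + t \<le> k"
    using T T' by (simp_all add: T_eq T'_eq cinteractions_def)
  have "r1 = r2" if r1: "r1 \<in> rho N A T" "r1 \<in> rho N A T'" and r2: "r2 \<in> rho N A T" "r2 \<in> rho N A T'"
    for r1 r2
  proof (cases "i = i'")
    case True
    have "xs ! m = xs' ! m" if "m < t" for m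
      using r1 that len by (simp add: rho_def T_eq T'_eq True)
    then have "xs = xs'" using len by (intro nth_equalityI) auto
    then show ?thesis using \<open>T \<noteq> T'\<close> by (simp add: T_eq T'_eq True)
  next
    case False
    have N: "r1 < N" "r2 < N" using r1 r2 by (simp_all add: rho_def)
    have "A r1 j = A r2 j" if "j \<in> {i..<i + t}" for j
      using rho_eq_on_window[of r1 N A i xs r2 j] r1 r2 that by (simp add: T_eq len)
    moreover have "A r1 j = A r2 j" if "j \<in> {i'..<i' + t}" for j
      using rho_eq_on_window[of r1 N A i' xs' r2 j] r1 r2 that by (simp add: T'_eq len)
    ultimately have agree: "A r1 j = A r2 j" if "j \<in> {i..<i + t} \<union> {i'..<i' + t}" for j
      using that by blast
    show ?thesis
    proof (cases "i < i'")
      case True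
      then show ?thesis using two_windows N agree len by blast
    next
      case False
      then have "i' < i" using \<open>i \<noteq> i'\<close> by simp
      then show ?thesis using two_windows[of i' i] N agree len by (simp add: Un_commute)
    qed
  qed
  then show ?thesis using finite_rho by (simp add: card_le_Suc0_iff_eq)
qed

lemma finite_cinteractions: "finite (cinteractions k t v)"
proof -
  have "cinteractions k t v \<subseteq> {..k} \<times> {xs. set xs \<subseteq> {0..<v} \<and> length xs = t}"
    by (auto simp: cinteractions_def)
  then show ?thesis by (rule finite_subset) (simp add: finite_lists_length_eq)
qed

lemma is_CDA_intro:
  assumes entries_lt: "\<And>r j. r < N \<Longrightarrow> j < k \<Longrightarrow> A r j < v"
    and cover: "\<And>T. T \<in> cinteractions k t v \<Longrightarrow> d + 1 \<le> card (rho N A T)"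
    and two_windows: "\<And>i i' r1 r2. i < i' \<Longrightarrow> i' + t \<le> k \<Longrightarrow> r1 < N \<Longrightarrow> r2 < N \<Longrightarrow>
        (\<And>j. j \<in> {i..<i + t} \<union> {i'..<i' + t} \<Longrightarrow> A r1 j = A r2 j) \<Longrightarrow> r1 = r2"
  shows "is_CDA d t N k v A"
  unfolding is_CDA_def
proof (intro conjI allI impI ballI)
  fix T assume "T \<in> cinteractions k t v"
  then show "rho N A T \<noteq> {}" using cover[of T] by fastforce
next
  fix S T assume S: "S \<subseteq> cinteractions k t v \<and> card S = d" and T: "T \<in> cinteractions k t v"
  show "rho N A T \<subseteq> rho_set N A S \<longleftrightarrow> T \<in> S"
  proof
    assume covered: "rho N A T \<subseteq> rho_set N A S"
    show "T \<in> S"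
    proof (rule ccontr)
      assume "T \<notin> S"
      have "finite S" using S finite_cinteractions finite_subset by blast
      have "rho N A T = (\<Union>T'\<in>S. rho N A T \<inter> rho N A T')"
        using covered by (auto simp: rho_set_def)
      then have "card (rho N A T) \<le> (\<Sum>T'\<in>S. card (rho N A T \<inter> rho N A T'))"
        by (metis card_UN_le \<open>finite S\<close>)
      also have "\<dots> \<le> (\<Sum>T'\<in>S. 1)"
        using S T \<open>T \<notin> S\<close> by (intro sum_mono card_rho_Int_le_one[OF two_windows]) auto
      finally show False using cover[OF T] S by simp
    qed
  qed (auto simp: rho_set_def)
qed (use entries_lt in auto)

lemma ex_preimage_list:
  assumes "bij_betw f A B" "set xs \<subseteq> B"
  shows "\<exists>ys. set ys \<subseteq> A \<and> map f ys = xs"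
proof (intro exI conjI)
  have sub: "set xs \<subseteq> f ` A" using assms by (simp add: bij_betw_def)
  then show "set (map (inv_into A f) xs) \<subseteq> A" by (auto intro: inv_into_into)
  show "map f (map (inv_into A f) xs) = xs"
    using sub by (induction xs) (simp_all add: f_inv_into_f)
qed

lemma card_preimage_bij_betw:
  assumes f: "bij_betw f A B" and "M \<subseteq> B"
  shows "card {x \<in> A. f x \<in> M} = card M"
proof -
  have "M \<subseteq> f ` {x \<in> A. f x \<in> M}"
  proof
    fix y assume "y \<in> M"
    then have "y \<in> f ` A" using f \<open>M \<subseteq> B\<close> by (auto simp: bij_betw_def)
    then show "y \<in> f ` {x \<in> A. f x \<in> M}" using \<open>y \<in> M\<close> by blast
  qed
  then have "f ` {x \<in> A. f x \<in> M} = M" by blast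
  moreover have "inj_on f {x \<in> A. f x \<in> M}"
    using f by (auto simp: bij_betw_def intro: inj_on_subset)
  ultimately show ?thesis using card_image by fastforce
qed

lemma ex_CDA_from_rows:
  fixes F :: "'r \<Rightarrow> nat \<Rightarrow> 'a" and enc :: "'a \<Rightarrow> nat"
  assumes "finite Rows" and enc: "bij_betw enc V {0..<v}"
    and entries: "\<And>\<rho> j. \<rho> \<in> Rows \<Longrightarrow> j < k \<Longrightarrow> F \<rho> j \<in> V"
    and cover: "\<And>i ys. i + t \<le> k \<Longrightarrow> length ys = t \<Longrightarrow> set ys \<subseteq> V \<Longrightarrow>
        d + 1 \<le> card {\<rho> \<in> Rows. \<forall>j < t. F \<rho> (i + j) = ys ! j}"
    and two_windows: "\<And>i i' \<rho>1 \<rho>2. i < i' \<Longrightarrow> i' + t \<le> k \<Longrightarrow> \<rho>1 \<in> Rows \<Longrightarrow> \<rho>2 \<in> Rows \<Longrightarrow>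
        (\<And>j. j \<in> {i..<i + t} \<union> {i'..<i' + t} \<Longrightarrow> F \<rho>1 j = F \<rho>2 j) \<Longrightarrow> \<rho>1 = \<rho>2"
  shows "\<exists>A. is_CDA d t (card Rows) k v A"
proof -
  let ?N = "card Rows"
  obtain row where row: "bij_betw row {0..<?N} Rows"
    using ex_bij_betw_nat_finite[OF \<open>finite Rows\<close>] by blast
  define A where "A r j = enc (F (row r) j)" for r j
  have row_in: "row r \<in> Rows" if "r < ?N" for r using row that by (auto simp: bij_betw_def)
  have enc_inj: "inj_on enc V" using enc by (simp add: bij_betw_def)
  have "is_CDA d t ?N k v A"
  proof (rule is_CDA_intro)
    show "A r j < v" if "r < ?N" "j < k" for r j
      using enc entries[OF row_in] that by (auto simp: A_def bij_betw_def)
  next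
    fix T assume T: "T \<in> cinteractions k t v"
    obtain i xs where T_eq: "T = (i, xs)" by (cases T)
    have i: "i + t \<le> k" and xs: "length xs = t" "set xs \<subseteq> {0..<v}"
      using T by (simp_all add: T_eq cinteractions_def)
    from ex_preimage_list[OF enc xs(2)]
    obtain ys where ys: "set ys \<subseteq> V" "map enc ys = xs" by blast
    then have len: "length ys = t" using xs(1) by auto
    define M where "M = {\<rho> \<in> Rows. \<forall>j < t. F \<rho> (i + j) = ys ! j}"
    have "A r (i + j) = xs ! j \<longleftrightarrow> F (row r) (i + j) = ys ! j" if "r < ?N" "j < t" for r j
    proof -
      have "F (row r) (i + j) \<in> V" using entries[OF row_in] that i by simp
      moreover have "ys ! j \<in> V" using ys(1) len that by (simp add: subset_iff)
      moreover have "xs ! j = enc (ys ! j)" using ys(2) len that by auto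
      ultimately show ?thesis using inj_on_eq_iff[OF enc_inj] by (simp add: A_def)
    qed
    then have "rho ?N A T = {r \<in> {0..<?N}. row r \<in> M}"
      using row_in by (auto simp: rho_def T_eq M_def xs)
    moreover have "card {r \<in> {0..<?N}. row r \<in> M} = card M"
      by (rule card_preimage_bij_betw[OF row]) (simp add: M_def)
    moreover have "d + 1 \<le> card M" using cover[OF i len ys(1)] by (simp add: M_def)
    ultimately show "d + 1 \<le> card (rho ?N A T)" by (simp only:)
  next
    fix i i' r1 r2
    assume ii: "i < i'" "i' + t \<le> k" and r: "r1 < ?N" "r2 < ?N"
      and agree: "\<And>j. j \<in> {i..<i + t} \<union> {i'..<i' + t} \<Longrightarrow> A r1 j = A r2 j"
    have "F (row r1) j = F (row r2) j" if "j \<in> {i..<i + t} \<union> {i'..<i' + t}" for j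
    proof -
      have "j < k" using that ii by auto
      then show ?thesis
        using agree[OF that] entries[OF row_in] r enc_inj by (auto simp: A_def inj_on_def)
    qed
    then have "row r1 = row r2" using two_windows[OF ii row_in row_in] r by blast
    then show "r1 = r2" using row r by (auto simp: bij_betw_def inj_on_def)
  qed
  then show ?thesis by blast
qed

section \<open>Evaluating polynomials on the projective line\<close>

lemma (in cring) eval_map2_minus:
  assumes "length l1 = length l2" "set l1 \<subseteq> carrier R" "set l2 \<subseteq> carrier R" "x \<in> carrier R"
  shows "eval (map2 (\<lambda>a b. a \<ominus> b) l1 l2) x = eval l1 x \<ominus> eval l2 x"
  using assms
proof (induction l1 l2 rule: list_induct2)
  case (Cons a l1 b l2)
  have carrier: "a \<in> carrier R" "b \<in> carrier R" "x [^] length l1 \<in> carrier R"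
    "eval l1 x \<in> carrier R" "eval l2 x \<in> carrier R"
    using Cons by (auto intro: eval_in_carrier)
  have "eval (map2 (\<lambda>a b. a \<ominus> b) (a # l1) (b # l2)) x
      = (a \<ominus> b) \<otimes> x [^] length l1 \<oplus> (eval l1 x \<ominus> eval l2 x)"
    using Cons by simp
  also have "\<dots> = (a \<otimes> x [^] length l1 \<oplus> eval l1 x) \<ominus> (b \<otimes> x [^] length l1 \<oplus> eval l2 x)"
    using carrier by algebra
  finally show ?case using Cons(1) by simp
qed (simp add: minus_eq)

context field
begin

lemma coeffs_zero_if_many_roots:
  assumes l: "set l \<subseteq> carrier R" and Xs: "finite Xs" "Xs \<subseteq> carrier R" "length l \<le> card Xs"
    and roots: "\<And>x. x \<in> Xs \<Longrightarrow> eval l x = \<zero>"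
  shows "set l \<subseteq> {\<zero>}"
proof -
  define p where "p = normalize l"
  have p: "p \<in> carrier (poly_ring R)"
    unfolding p_def univ_poly_carrier[symmetric] using normalize_gives_polynomial[OF l] .
  have "p = []"
  proof (rule ccontr)
    assume "p \<noteq> []"
    have "Xs \<subseteq> set_mset (roots p)"
      using roots_mem_iff_is_root[OF p] roots eval_normalize[OF l] \<open>p \<noteq> []\<close> Xs
      unfolding is_root_def p_def by auto
    then have "card Xs \<le> card (set_mset (roots p))" by (intro card_mono) auto
    also have "\<dots> \<le> size (roots p)"
      using size_mset_mono[OF mset_set_set_mset_msubset] by simp
    also have "\<dots> \<le> degree p" by (rule size_roots_le_degree[OF p])
    also have "\<dots> < length l"
      using normalize_length_le[of l] \<open>p \<noteq> []\<close> unfolding p_def by (cases l) auto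
    finally show False using Xs by simp
  qed
  then have "l = replicate (length l) \<zero>" using normalize_trick[of l] unfolding p_def by simp
  then show ?thesis by (metis in_set_replicate subsetI singletonI)
qed

lemma coeffs_eq_if_eval_eq:
  assumes len: "length l1 = length l2" and l: "set l1 \<subseteq> carrier R" "set l2 \<subseteq> carrier R"
    and Xs: "finite Xs" "Xs \<subseteq> carrier R" "length l1 \<le> card Xs"
    and eq: "\<And>x. x \<in> Xs \<Longrightarrow> eval l1 x = eval l2 x"
  shows "l1 = l2"
proof (rule nth_equalityI[OF len])
  let ?d = "map2 (\<lambda>a b. a \<ominus> b) l1 l2"
  have "set ?d \<subseteq> carrier R"
    using l by (auto dest!: set_zip_leftD set_zip_rightD elim!: in_set_zipE)
  moreover have "eval ?d x = \<zero>" if "x \<in> Xs" for x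
  proof -
    have "x \<in> carrier R" using that Xs by auto
    then show ?thesis using eval_map2_minus[OF len l] eq[OF that] eval_in_carrier[OF l(2)] by simp
  qed
  ultimately have zero: "set ?d \<subseteq> {\<zero>}"
    using Xs len by (intro coeffs_zero_if_many_roots) simp_all
  fix i assume i: "i < length l1"
  then have "?d ! i \<in> set ?d" using len by (intro nth_mem) simp
  then have "l1 ! i \<ominus> l2 ! i = \<zero>" using zero i len by auto
  moreover have "l1 ! i \<in> carrier R" "l2 ! i \<in> carrier R"
    using i len l by (auto intro!: nth_mem[THEN subsetD[rotated]])
  ultimately show "l1 ! i = l2 ! i" by simp
qed

lemma eval_Cons_cancel:
  assumes "c \<in> carrier R" "set g1 \<subseteq> carrier R" "set g2 \<subseteq> carrier R" "length g1 = length g2"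
    and "x \<in> carrier R" and "eval (c # g1) x = eval (c # g2) x"
  shows "eval g1 x = eval g2 x"
proof -
  have "c \<otimes> x [^] length g1 \<oplus> eval g1 x = c \<otimes> x [^] length g1 \<oplus> eval g2 x"
    using assms by simp
  moreover have "c \<otimes> x [^] length g1 \<in> carrier R" "eval g1 x \<in> carrier R" "eval g2 x \<in> carrier R"
    using assms by (auto intro: eval_in_carrier)
  ultimately show ?thesis by (metis add.l_cancel)
qed

text \<open>
  A coefficient list (leading coefficient first) is evaluated at a point of the projective line,
  \<open>None\<close> being the point at infinity. Rows of the arrays below have a prescribed leading
  coefficient, so the value at infinity is taken to be the next coefficient.
\<close>

definition proj_eval :: "'a list \<Rightarrow> 'a option \<Rightarrow> 'a"
  where "proj_eval l P = (case P of None \<Rightarrow> l ! 1 | Some x \<Rightarrow> eval l x)"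

lemma proj_eval_closed:
  assumes "set l \<subseteq> carrier R" "2 \<le> length l" "set_option P \<subseteq> carrier R"
  shows "proj_eval l P \<in> carrier R"
  using assms by (cases P) (auto simp: proj_eval_def intro!: eval_in_carrier nth_mem[THEN subsetD[rotated]])

lemma affine_part_of_proj_points:
  assumes "finite P" "\<Union>(set_option ` P) \<subseteq> carrier R"
  shows "finite {x. Some x \<in> P}" "{x. Some x \<in> P} \<subseteq> carrier R"
    and "card P \<le> Suc (card {x. Some x \<in> P})" "None \<notin> P \<Longrightarrow> card P \<le> card {x. Some x \<in> P}"
proof -
  let ?X = "{x. Some x \<in> P}"
  show fin: "finite ?X" using assms(1) by (rule finite_vimageI[of _ Some, unfolded vimage_def]) simp
  show "?X \<subseteq> carrier R" using assms(2) by force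
  have "P \<subseteq> insert None (Some ` ?X)" by (auto intro: option.exhaust)
  then have "card P \<le> card (insert None (Some ` ?X))" using fin by (intro card_mono) auto
  also have "\<dots> \<le> Suc (card ?X)" using fin by (simp add: card_insert_if card_image)
  finally show "card P \<le> Suc (card ?X)" .
  assume "None \<notin> P"
  have "P \<subseteq> Some ` ?X"
  proof
    fix y assume "y \<in> P"
    then obtain x where "y = Some x" using \<open>None \<notin> P\<close> by (cases y) auto
    then show "y \<in> Some ` ?X" using \<open>y \<in> P\<close> by auto
  qed
  then show "card P \<le> card ?X" using fin by (metis card_image card_mono finite_imageI inj_Some inj_on_subset subset_UNIV)
qed

lemma proj_eval_inj:
  assumes len: "length l1 = length l2" and l: "set l1 \<subseteq> carrier R" "set l2 \<subseteq> carrier R"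
    and P: "finite P" "\<Union>(set_option ` P) \<subseteq> carrier R" "None \<notin> P" "length l1 \<le> card P"
    and eq: "\<And>y. y \<in> P \<Longrightarrow> proj_eval l1 y = proj_eval l2 y"
  shows "l1 = l2"
proof (rule coeffs_eq_if_eval_eq[OF len l])
  note X = affine_part_of_proj_points[OF P(1,2)]
  show "finite {x. Some x \<in> P}" by (fact X(1))
  show "{x. Some x \<in> P} \<subseteq> carrier R" by (fact X(2))
  show "length l1 \<le> card {x. Some x \<in> P}" using X(4)[OF P(3)] P(4) by simp
  show "eval l1 x = eval l2 x" if "x \<in> {x. Some x \<in> P}" for x
    using eq[of "Some x"] that by (simp add: proj_eval_def)
qed

lemma proj_eval_Cons_inj:
  assumes c: "c \<in> carrier R" and g: "set g1 \<subseteq> carrier R" "set g2 \<subseteq> carrier R" "length g1 = length g2"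
    and P: "finite P" "\<Union>(set_option ` P) \<subseteq> carrier R" "length g1 \<le> card P"
    and eq: "\<And>y. y \<in> P \<Longrightarrow> proj_eval (c # g1) y = proj_eval (c # g2) y"
  shows "g1 = g2"
proof -
  let ?X = "{x. Some x \<in> P}"
  note X = affine_part_of_proj_points[OF P(1,2)]
  have eval_eq: "eval g1 x = eval g2 x" if "x \<in> ?X" for x
    using eval_Cons_cancel[OF c g] eq[of "Some x"] that X(2) by (auto simp: proj_eval_def)
  show ?thesis
  proof (cases "None \<in> P")
    case False
    then show ?thesis using coeffs_eq_if_eval_eq[OF g(3,1,2) X(1,2)] X(4) P(3) eval_eq by simp
  next
    case True
    show ?thesis
    proof (cases g1)
      case Nil
      then show ?thesis using g(3) by simp
    next
      case (Cons a1 h1)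
      then obtain a2 h2 where g2: "g2 = a2 # h2" using g(3) by (cases g2) auto
      have "a1 = a2" using eq[OF True] by (simp add: proj_eval_def Cons g2)
      then have "eval h1 x = eval h2 x" if "x \<in> ?X" for x
        using eval_Cons_cancel[of a1 h1 h2 x] eval_eq[OF that] g X(2) that by (auto simp: Cons g2)
      then have "h1 = h2"
        using coeffs_eq_if_eval_eq[of h1 h2 ?X] X(1-3) P(3) g by (auto simp: Cons g2)
      then show ?thesis using \<open>a1 = a2\<close> by (simp add: Cons g2)
    qed
  qed
qed

lemma eval_quadratic:
  assumes "c \<in> carrier R" "a \<in> carrier R" "b \<in> carrier R" "x \<in> carrier R"
  shows "eval [c, a, b] x = a \<otimes> x \<oplus> eval [c, b] (x \<otimes> x)"
  using assms by (simp add: numeral_2_eq_2) algebra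

lemma eval_quadratic_inj_char_two:
  assumes char: "[(2::nat)] \<cdot> \<one> = \<zero>"
    and coeffs: "c1 \<in> carrier R" "a \<in> carrier R" "b1 \<in> carrier R" "c2 \<in> carrier R" "b2 \<in> carrier R"
    and S: "finite S" "S \<subseteq> carrier R" "2 \<le> card S"
    and eq: "\<And>x. x \<in> S \<Longrightarrow> eval [c1, a, b1] x = eval [c2, a, b2] x"
  shows "c1 = c2 \<and> b1 = b2"
proof -
  have "eval [c1, b1] y = eval [c2, b2] y" if y: "y \<in> (\<lambda>x. x \<otimes> x) ` S" for y
  proof -
    obtain x where x: "x \<in> S" "y = x \<otimes> x" using y by blast
    have x_c: "x \<in> carrier R" using x(1) S(2) by blast
    have "a \<otimes> x \<oplus> eval [c1, b1] y = eval [c1, a, b1] x"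
      unfolding x(2) by (rule eval_quadratic[OF coeffs(1-3) x_c, symmetric])
    also have "\<dots> = eval [c2, a, b2] x" using eq[OF x(1)] .
    also have "\<dots> = a \<otimes> x \<oplus> eval [c2, b2] y"
      unfolding x(2) by (rule eval_quadratic[OF coeffs(4,2,5) x_c])
    finally have "a \<otimes> x \<oplus> eval [c1, b1] y = a \<otimes> x \<oplus> eval [c2, b2] y" .
    moreover have "y \<in> carrier R" using x_c x(2) by simp
    then have "eval [c1, b1] y \<in> carrier R" "eval [c2, b2] y \<in> carrier R"
      using coeffs by (intro eval_in_carrier; simp)+
    ultimately show ?thesis using add.l_cancel[of "a \<otimes> x"] coeffs x_c by blast
  qed
  moreover have "inj_on (\<lambda>x. x \<otimes> x) S"
  proof (rule inj_onI)
    fix x y assume "x \<in> S" "y \<in> S" "x \<otimes> x = y \<otimes> y"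
    then show "x = y" using square_inj_char_two[OF char] S(2) by blast
  qed
  then have "card ((\<lambda>x. x \<otimes> x) ` S) = card S" by (rule card_image)
  then have "length [c1, b1] \<le> card ((\<lambda>x. x \<otimes> x) ` S)" using S(3) by simp
  moreover have "(\<lambda>x. x \<otimes> x) ` S \<subseteq> carrier R" using S(2) by auto
  ultimately have "[c1, b1] = [c2, b2]"
    using S(1) coeffs by (intro coeffs_eq_if_eval_eq) simp_all
  then show ?thesis by simp
qed

lemma proj_eval_quadratic_inj:
  assumes char: "[(2::nat)] \<cdot> \<one> = \<zero>"
    and l: "set l1 \<subseteq> carrier R" "length l1 = 3" "set l2 \<subseteq> carrier R" "length l2 = 3"
    and P: "finite P" "\<Union>(set_option ` P) \<subseteq> carrier R" "3 \<le> card P"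
    and eq: "\<And>y. y \<in> P \<Longrightarrow> proj_eval l1 y = proj_eval l2 y"
  shows "l1 = l2"
proof (cases "None \<in> P")
  case False
  then show ?thesis using proj_eval_inj[OF _ l(1,3) P(1,2) False] l P(3) eq by simp
next
  case True
  let ?X = "{x. Some x \<in> P}"
  note X = affine_part_of_proj_points[OF P(1,2)]
  obtain c1 a1 b1 c2 a2 b2 where l_eq: "l1 = [c1, a1, b1]" "l2 = [c2, a2, b2]"
    using l(2,4) by (auto simp: numeral_3_eq_3 length_Suc_conv)
  have coeffs: "c1 \<in> carrier R" "a1 \<in> carrier R" "b1 \<in> carrier R"
    "c2 \<in> carrier R" "a2 \<in> carrier R" "b2 \<in> carrier R"
    using l(1,3) by (simp_all add: l_eq)
  have "a1 = a2" using eq[OF True] by (simp add: proj_eval_def l_eq)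
  moreover have "c1 = c2 \<and> b1 = b2"
  proof (rule eval_quadratic_inj_char_two[OF char coeffs(1-4,6) X(1,2)])
    show "2 \<le> card ?X" using X(3) P(3) by simp
    show "eval [c1, a1, b1] x = eval [c2, a1, b2] x" if "x \<in> ?X" for x
      using eq[of "Some x"] that \<open>a1 = a2\<close> by (simp add: proj_eval_def l_eq)
  qed
  ultimately show ?thesis by (simp add: l_eq)
qed

end

section \<open>The two constructions\<close>

lemma inj_on_mod_interval: "inj_on (\<lambda>j. j mod m) {a..<a + (m::nat)}"
proof (rule linorder_inj_onI)
  fix x y assume "x < y" "x \<in> {a..<a + m}" "y \<in> {a..<a + m}"
  then have "0 < y - x" "y - x < m" by auto
  then show "x mod m \<noteq> y mod m"
    using mod_eq_dvd_iff_nat[of x y m] \<open>x < y\<close> by (auto dest: nat_dvd_not_less)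
qed auto

text \<open>
  The column sequence on \<open>\<int>/m\<close>: first \<open>0, 1, \<dots>, m - 1\<close>, then \<open>0, 2, 4, \<dots>\<close>, i.e. one round with
  step 1 and one with step 2. For odd \<open>m \<ge> 5\<close> no two windows of length 2 see the same pair.
\<close>

definition doubling_seq :: "nat \<Rightarrow> nat \<Rightarrow> nat"
  where "doubling_seq m j = (if j < m then j else 2 * (j - m)) mod m"

lemma doubling_seq_mod: "doubling_seq m j mod m = doubling_seq m j"
  by (simp add: doubling_seq_def)

lemma doubling_seq_Suc:
  assumes "0 < m"
  shows "doubling_seq m (Suc j) = (doubling_seq m j + (if j < m then 1 else 2)) mod m"
proof (cases "j < m")
  case True
  have "doubling_seq m (Suc j) = Suc j mod m"
  proof (cases "Suc j < m")
    case False
    then have "Suc j = m" using True by simp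
    then show ?thesis by (simp add: doubling_seq_def)
  qed (simp add: doubling_seq_def)
  then show ?thesis using True by (simp add: doubling_seq_def)
next
  case False
  then have "Suc j - m = Suc (j - m)" by (simp add: Suc_diff_le)
  then have "doubling_seq m (Suc j) = (2 * (j - m) + 2) mod m" using False by (simp add: doubling_seq_def)
  also have "\<dots> = (2 * (j - m) mod m + 2) mod m" by (rule mod_add_left_eq[symmetric])
  finally show ?thesis using False by (simp add: doubling_seq_def)
qed

lemma doubling_seq_Suc_neq:
  assumes "3 \<le> m"
  shows "doubling_seq m (Suc j) \<noteq> doubling_seq m j"
proof
  let ?e = "if j < m then 1 else 2 :: nat"
  assume "doubling_seq m (Suc j) = doubling_seq m j"
  then have "[doubling_seq m j + ?e = doubling_seq m j] (mod m)"
    using doubling_seq_Suc[of m j] assms by (simp add: cong_def doubling_seq_mod)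
  then have "m dvd ?e" by (simp add: cong_add_lcancel_0_nat cong_0_iff)
  then have "m \<le> ?e" by (rule dvd_imp_le) simp
  then show False using assms by (simp split: if_splits)
qed

lemma doubling_seq_new_point:
  assumes m: "5 \<le> m" "odd m" and j: "j < j'" "j' < 2 * m"
  shows "\<exists>j'' \<in> {j', Suc j'}. doubling_seq m j'' \<notin> {doubling_seq m j, doubling_seq m (Suc j)}"
proof (rule ccontr)
  let ?s = "doubling_seq m"
  define e where "e n = (if n < m then 1 else 2 :: nat)" for n
  have step: "[?s (Suc n) = ?s n + e n] (mod m)" for n
    using doubling_seq_Suc[of m n] m by (simp add: e_def cong_def)
  have e: "0 < e n" "e n < 3" for n by (simp_all add: e_def)
  have neq: "?s (Suc n) \<noteq> ?s n" for n using doubling_seq_Suc_neq m(1) by simp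
  assume "\<not> ?thesis"
  then have "?s j' \<in> {?s j, ?s (Suc j)}" "?s (Suc j') \<in> {?s j, ?s (Suc j)}" by auto
  then consider "?s j' = ?s j" "?s (Suc j') = ?s (Suc j)" | "?s j' = ?s (Suc j)" "?s (Suc j') = ?s j"
    using neq[of j] neq[of j'] by auto
  then show False
  proof cases
    case 1
    then have "[?s j + e j = ?s j + e j'] (mod m)"
      using step[of j] step[of j'] by (metis cong_sym cong_trans)
    then have "[e j = e j'] (mod m)" by (simp add: cong_add_lcancel_nat)
    then have "e j = e j'"
      by (rule cong_less_modulus_unique_nat) (use e[of j] e[of j'] m(1) in linarith)+
    then have "j < m \<longleftrightarrow> j' < m" by (simp add: e_def split: if_splits)
    show False
    proof (cases "j' < m")
      case True
      then show False using 1 j \<open>j < m \<longleftrightarrow> j' < m\<close> by (simp add: doubling_seq_def)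
    next
      case False
      then have "[2 * (j - m) = 2 * (j' - m)] (mod m)"
        using 1 \<open>j < m \<longleftrightarrow> j' < m\<close> by (simp add: doubling_seq_def cong_def)
      then have "[j - m = j' - m] (mod m)" using m(2) by (simp add: cong_mult_lcancel_nat)
      then have "j - m = j' - m" using j False by (intro cong_less_modulus_unique_nat) auto
      then show False using j False \<open>j < m \<longleftrightarrow> j' < m\<close> by simp
    qed
  next
    case 2
    have "[?s j = ?s (Suc j) + e j'] (mod m)" using step[of j'] 2 by simp
    also have "[?s (Suc j) + e j' = ?s j + e j + e j'] (mod m)" using step[of j] by (rule cong_add) simp
    finally have "[?s j + (e j + e j') = ?s j] (mod m)" by (simp add: cong_sym_eq add.assoc)
    then have "m dvd e j + e j'" by (simp add: cong_add_lcancel_0_nat cong_0_iff)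
    then have "m \<le> e j + e j'" by (rule dvd_imp_le) (use e[of j] in simp)
    then show False using e[of j] e[of j'] m(1) by linarith
  qed
qed

context field
begin

lemma ex_coeffs_with_window_values:
  fixes pt :: "nat \<Rightarrow> 'a option"
  assumes fin: "finite (carrier R)" and c: "c \<in> carrier R" and t: "0 < t"
    and pt: "\<And>j. set_option (pt j) \<subseteq> carrier R"
    and window: "\<And>g1 g2. set g1 \<subseteq> carrier R \<Longrightarrow> length g1 = t \<Longrightarrow> set g2 \<subseteq> carrier R \<Longrightarrow> length g2 = t \<Longrightarrow>
        (\<And>j. j \<in> {i..<i + t} \<Longrightarrow> proj_eval (c # g1) (pt j) = proj_eval (c # g2) (pt j)) \<Longrightarrow> g1 = g2"
    and ys: "length ys = t" "set ys \<subseteq> carrier R"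
  shows "\<exists>g. set g \<subseteq> carrier R \<and> length g = t \<and> (\<forall>j < t. proj_eval (c # g) (pt (i + j)) = ys ! j)"
proof -
  define G where "G = {g. set g \<subseteq> carrier R \<and> length g = t}"
  define \<Phi> where "\<Phi> g = map (\<lambda>j. proj_eval (c # g) (pt (i + j))) [0..<t]" for g
  have "proj_eval (c # g) (pt j) \<in> carrier R" if "g \<in> G" for g j
    using that c t pt by (intro proj_eval_closed) (auto simp: G_def)
  then have "\<Phi> ` G \<subseteq> G" by (auto simp: G_def \<Phi>_def)
  moreover have "inj_on \<Phi> G"
  proof (rule inj_onI)
    fix g1 g2 assume g: "g1 \<in> G" "g2 \<in> G" "\<Phi> g1 = \<Phi> g2"
    show "g1 = g2"
    proof (rule window)
      fix j assume "j \<in> {i..<i + t}"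
      then have "j = i + (j - i)" "j - i < t" by auto
      then show "proj_eval (c # g1) (pt j) = proj_eval (c # g2) (pt j)"
        using arg_cong[OF g(3), of "\<lambda>l. l ! (j - i)"] by (simp add: \<Phi>_def)
    qed (use g in \<open>simp_all add: G_def\<close>)
  qed
  moreover have "finite G" unfolding G_def using fin by (rule finite_lists_length_eq)
  ultimately have "\<Phi> ` G = G" by (intro endo_inj_surj)
  moreover have "ys \<in> G" using ys by (simp add: G_def)
  ultimately obtain g where "g \<in> G" "\<Phi> g = ys" by (metis imageE)
  then show ?thesis by (auto simp: G_def \<Phi>_def)
qed

lemma optimum_CDA_from_points:
  fixes pt :: "nat \<Rightarrow> 'a option" and d t k q :: nat
  assumes fin: "finite (carrier R)" and q: "card (carrier R) = q" and "d < q" and t: "0 < t"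
    and pt: "\<And>j. set_option (pt j) \<subseteq> carrier R"
    and window: "\<And>i c g1 g2. i + t \<le> k \<Longrightarrow> c \<in> carrier R \<Longrightarrow>
        set g1 \<subseteq> carrier R \<Longrightarrow> length g1 = t \<Longrightarrow> set g2 \<subseteq> carrier R \<Longrightarrow> length g2 = t \<Longrightarrow>
        (\<And>j. j \<in> {i..<i + t} \<Longrightarrow> proj_eval (c # g1) (pt j) = proj_eval (c # g2) (pt j)) \<Longrightarrow> g1 = g2"
    and two_windows: "\<And>i i' l1 l2. i < i' \<Longrightarrow> i' + t \<le> k \<Longrightarrow>
        set l1 \<subseteq> carrier R \<Longrightarrow> length l1 = Suc t \<Longrightarrow> set l2 \<subseteq> carrier R \<Longrightarrow> length l2 = Suc t \<Longrightarrow>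
        (\<And>j. j \<in> {i..<i + t} \<union> {i'..<i' + t} \<Longrightarrow> proj_eval l1 (pt j) = proj_eval l2 (pt j)) \<Longrightarrow> l1 = l2"
  shows "\<exists>A. optimum_CDA d t ((d + 1) * q ^ t) k q A"
proof -
  obtain C where C: "C \<subseteq> carrier R" "card C = d + 1"
    using obtain_subset_with_card_n[of "d + 1" "carrier R"] \<open>d < q\<close> q by auto
  obtain enc where enc: "bij_betw enc (carrier R) {0..<q}"
    using ex_bij_betw_finite_nat[OF fin] q by blast
  define G where "G = {g. set g \<subseteq> carrier R \<and> length g = t}"
  define Rows where "Rows = (\<lambda>(c, g). c # g) ` (C \<times> G)"
  have "finite C" using C(1) fin by (rule finite_subset)
  have "finite G" unfolding G_def using fin by (rule finite_lists_length_eq)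
  have "inj_on (\<lambda>(c, g). c # g) (C \<times> G)" by (auto simp: inj_on_def)
  then have card_Rows: "card Rows = (d + 1) * q ^ t"
    using C(2) card_lists_length_eq[OF fin, of t] q
    by (simp add: Rows_def G_def card_image card_cartesian_product)
  have Rows: "set l \<subseteq> carrier R" "length l = Suc t" if "l \<in> Rows" for l
    using that C(1) by (auto simp: Rows_def G_def)
  have "finite Rows" unfolding Rows_def using \<open>finite C\<close> \<open>finite G\<close> by simp
  have "\<exists>A. is_CDA d t (card Rows) k q A"
  proof (rule ex_CDA_from_rows[where F = "\<lambda>l j. proj_eval l (pt j)", OF \<open>finite Rows\<close> enc])
    show "proj_eval l (pt j) \<in> carrier R" if "l \<in> Rows" for l j
      using Rows[OF that] t pt by (intro proj_eval_closed) simp_all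
  next
    fix i ys assume i: "i + t \<le> k" and ys: "length ys = t" "set ys \<subseteq> carrier R"
    define M where "M = {l \<in> Rows. \<forall>j < t. proj_eval l (pt (i + j)) = ys ! j}"
    have ex: "\<exists>g. g \<in> G \<and> (\<forall>j < t. proj_eval (c # g) (pt (i + j)) = ys ! j)" if "c \<in> C" for c
    proof -
      have c: "c \<in> carrier R" using that C(1) by blast
      note ex_g = ex_coeffs_with_window_values[OF fin c t pt window[OF i c] ys]
      from ex_g obtain g where "set g \<subseteq> carrier R \<and> length g = t \<and> (\<forall>j < t. proj_eval (c # g) (pt (i + j)) = ys ! j)"
        by (rule exE)
      then show ?thesis unfolding G_def by blast
    qed
    define g where "g c = (SOME g. g \<in> G \<and> (\<forall>j < t. proj_eval (c # g) (pt (i + j)) = ys ! j))" for c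
    have g: "g c \<in> G \<and> (\<forall>j < t. proj_eval (c # g c) (pt (i + j)) = ys ! j)" if "c \<in> C" for c
      unfolding g_def by (rule someI_ex[OF ex[OF that]])
    have "c # g c \<in> M" if "c \<in> C" for c
    proof -
      have "c # g c \<in> Rows" unfolding Rows_def using g[OF that] that by (intro image_eqI[of _ _ "(c, g c)"]) simp_all
      then show ?thesis using g[OF that] by (simp add: M_def)
    qed
    then have "(\<lambda>c. c # g c) ` C \<subseteq> M" by blast
    moreover have "finite M" using \<open>finite Rows\<close> by (simp add: M_def)
    moreover have "inj_on (\<lambda>c. c # g c) C" by (rule inj_onI) simp
    then have "card ((\<lambda>c. c # g c) ` C) = d + 1" using C(2) by (simp add: card_image)
    ultimately show "d + 1 \<le> card M" by (metis card_mono)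
  next
    fix i i' l1 l2 assume ii: "i < i'" "i' + t \<le> k" and l: "l1 \<in> Rows" "l2 \<in> Rows"
      and "\<And>j. j \<in> {i..<i + t} \<union> {i'..<i' + t} \<Longrightarrow> proj_eval l1 (pt j) = proj_eval l2 (pt j)"
    then show "l1 = l2" using two_windows[OF ii Rows[OF l(1)] Rows[OF l(2)]] by blast
  qed
  then show ?thesis using card_Rows by (simp add: optimum_CDA_def)
qed

lemma optimum_CDA_cyclic:
  fixes q d t :: nat
  assumes fin: "finite (carrier R)" and q: "card (carrier R) = q" and "d < q" and t: "0 < t" "t + 1 < q"
  shows "\<exists>A. optimum_CDA d t ((d + 1) * q ^ t) (q + t - 1) q A"
proof -
  obtain h where h: "bij_betw h {0..<q} (carrier R)"
    using ex_bij_betw_nat_finite[OF fin] q by blast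
  define pt where "pt j = Some (h (j mod q))" for j
  have pt: "set_option (pt j) \<subseteq> carrier R" for j
    using h t by (auto simp: pt_def bij_betw_def)
  then have pt_carrier: "\<Union>(set_option ` pt ` J) \<subseteq> carrier R" for J by blast
  have card_pt: "card (pt ` J) = card J" if "J \<subseteq> {a..<a + q}" for a J
  proof (rule card_image)
    have "inj_on (\<lambda>j. j mod q) J" using inj_on_mod_interval that by (rule inj_on_subset)
    moreover have "inj_on h {0..<q}" using h by (simp add: bij_betw_def)
    ultimately show "inj_on pt J"
      using t by (auto simp: pt_def inj_on_def)
  qed
  show ?thesis
  proof (rule optimum_CDA_from_points[OF fin q \<open>d < q\<close> t(1) pt])
    fix i c g1 g2 assume "c \<in> carrier R" and g: "set g1 \<subseteq> carrier R" "length g1 = t"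
      "set g2 \<subseteq> carrier R" "length g2 = t"
      and eq: "\<And>j. j \<in> {i..<i + t} \<Longrightarrow> proj_eval (c # g1) (pt j) = proj_eval (c # g2) (pt j)"
    show "g1 = g2"
    proof (rule proj_eval_Cons_inj[OF \<open>c \<in> carrier R\<close> g(1,3)])
      show "length g1 \<le> card (pt ` {i..<i + t})" using card_pt[of "{i..<i + t}" i] t g(2) by simp
      show "proj_eval (c # g1) y = proj_eval (c # g2) y" if "y \<in> pt ` {i..<i + t}" for y
        using that eq by blast
    qed (use g pt_carrier in simp_all)
  next
    fix i i' l1 l2 assume ii: "i < i'" "i' + t \<le> q + t - 1"
      and l: "set l1 \<subseteq> carrier R" "length l1 = Suc t" "set l2 \<subseteq> carrier R" "length l2 = Suc t"
      and eq: "\<And>j. j \<in> {i..<i + t} \<union> {i'..<i' + t} \<Longrightarrow> proj_eval l1 (pt j) = proj_eval l2 (pt j)"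
    define J where "J = insert (max (i + t) i') {i..<i + t}"
    have "J \<subseteq> {i..<i + t} \<union> {i'..<i' + t}" using ii t by (auto simp: J_def)
    moreover have "J \<subseteq> {i..<i + q}" using ii t by (auto simp: J_def)
    then have "card (pt ` J) = Suc t" using card_pt[of J i] by (simp add: J_def)
    ultimately show "l1 = l2"
    proof (intro proj_eval_inj[OF _ l(1,3), of "pt ` J"])
      show "proj_eval l1 y = proj_eval l2 y" if "y \<in> pt ` J" for y
        using that eq \<open>J \<subseteq> {i..<i + t} \<union> {i'..<i' + t}\<close> by blast
      show "None \<notin> pt ` J" by (auto simp: pt_def)
    qed (use l pt pt_carrier in \<open>simp_all add: J_def\<close>)
  qed
qed

lemma optimum_CDA_doubling:
  fixes q d :: nat
  assumes fin: "finite (carrier R)" and q: "card (carrier R) = q" and "d < q"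
    and char: "[(2::nat)] \<cdot> \<one> = \<zero>" and "4 \<le> q" and "even q"
  shows "\<exists>A. optimum_CDA d 2 ((d + 1) * q ^ 2) (2 * q + 3) q A"
proof -
  obtain h where h: "bij_betw h {0..<q} (carrier R)"
    using ex_bij_betw_nat_finite[OF fin] q by blast
  let ?s = "doubling_seq (q + 1)"
  define pt where "pt j = (if ?s j = q then None else Some (h (?s j)))" for j
  have s_le: "?s j \<le> q" for j by (simp add: doubling_seq_def)
  have pt: "set_option (pt j) \<subseteq> carrier R" for j
    using h s_le[of j] by (auto simp: pt_def bij_betw_def)
  have pt_eq: "pt j1 = pt j2 \<longleftrightarrow> ?s j1 = ?s j2" for j1 j2
    using h s_le[of j1] s_le[of j2] by (auto simp: pt_def bij_betw_def inj_on_def)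
  have m: "5 \<le> q + 1" "odd (q + 1)" using \<open>4 \<le> q\<close> \<open>even q\<close> by simp_all
  show ?thesis
  proof (rule optimum_CDA_from_points[OF fin q \<open>d < q\<close> _ pt])
    fix i c g1 g2 assume "c \<in> carrier R" and g: "set g1 \<subseteq> carrier R" "length g1 = 2"
      "set g2 \<subseteq> carrier R" "length g2 = 2"
      and eq: "\<And>j. j \<in> {i..<i + 2} \<Longrightarrow> proj_eval (c # g1) (pt j) = proj_eval (c # g2) (pt j)"
    have "pt i \<noteq> pt (Suc i)" using doubling_seq_Suc_neq[of "q + 1" i] m(1) pt_eq by simp
    then have "card {pt i, pt (Suc i)} = 2" by simp
    show "g1 = g2"
    proof (rule proj_eval_Cons_inj[OF \<open>c \<in> carrier R\<close> g(1,3)])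
      show "proj_eval (c # g1) y = proj_eval (c # g2) y" if "y \<in> {pt i, pt (Suc i)}" for y
        using that eq[of i] eq[of "Suc i"] by auto
    qed (use g \<open>card {pt i, pt (Suc i)} = 2\<close> pt in auto)
  next
    fix i i' l1 l2 assume ii: "i < i'" "i' + 2 \<le> 2 * q + 3"
      and l: "set l1 \<subseteq> carrier R" "length l1 = Suc 2" "set l2 \<subseteq> carrier R" "length l2 = Suc 2"
      and eq: "\<And>j. j \<in> {i..<i + 2} \<union> {i'..<i' + 2} \<Longrightarrow> proj_eval l1 (pt j) = proj_eval l2 (pt j)"
    obtain j3 where j3: "j3 \<in> {i', Suc i'}" "?s j3 \<notin> {?s i, ?s (Suc i)}"
      using doubling_seq_new_point[OF m ii(1)] ii(2) by auto
    have "?s i \<noteq> ?s (Suc i)" using doubling_seq_Suc_neq[of "q + 1" i] m(1) by simp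
    then have "card {pt i, pt (Suc i), pt j3} = 3" using j3(2) pt_eq by simp
    show "l1 = l2"
    proof (rule proj_eval_quadratic_inj[OF char l(1) _ l(3)])
      show "proj_eval l1 y = proj_eval l2 y" if "y \<in> {pt i, pt (Suc i), pt j3}" for y
        using that j3(1) eq[of i] eq[of "Suc i"] eq[of i'] eq[of "Suc i'"] by auto
    qed (use l \<open>card {pt i, pt (Suc i), pt j3} = 3\<close> pt in auto)
  qed simp
qed

end

theorem mainTheorem9:
  fixes q :: nat
  assumes "prime_power q"
  shows "(\<forall>d t. 0 < d \<and> 0 < t \<and> d < q \<and> t + 1 < q \<longrightarrow>
            (\<exists>A. optimum_CDA d t ((d + 1) * q ^ t) (q + t - 1) q A))
       \<and> (q \<ge> 4 \<and> (\<exists>n. q = 2 ^ n) \<longrightarrow>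
            (\<forall>d. 0 < d \<and> d < q \<longrightarrow>
               (\<exists>A. optimum_CDA d 2 ((d + 1) * q ^ 2) (2 * q + 3) q A)))"
proof -
  obtain p n where p: "prime p" and n: "0 < n" and q: "q = p ^ n"
    using assms by (auto simp: prime_power_def)
  obtain F :: "((int list \<times> nat) multiset \<Rightarrow> int) ring" where
    F: "field F" "finite (carrier F)" "card (carrier F) = q" "[p] \<cdot>\<^bsub>F\<^esub> \<one>\<^bsub>F\<^esub> = \<zero>\<^bsub>F\<^esub>"
    using finite_field_exists[OF p n] q by blast
  interpret F: field F by (rule F(1))
  show ?thesis
  proof (intro conjI impI allI)
    fix d t :: nat
    assume "0 < d \<and> 0 < t \<and> d < q \<and> t + 1 < q"
    then show "\<exists>A. optimum_CDA d t ((d + 1) * q ^ t) (q + t - 1) q A"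
      using F.optimum_CDA_cyclic[OF F(2,3)] by blast
  next
    fix d :: nat
    assume q2: "4 \<le> q \<and> (\<exists>n. q = 2 ^ n)" and d: "0 < d \<and> d < q"
    then obtain m where m: "q = 2 ^ m" by blast
    then have "p dvd 2 ^ m" using dvd_power[of n p] n q by simp
    then have "p = 2" using p by (metis prime_dvd_power two_is_prime_nat primes_dvd_imp_eq)
    moreover have "even q" using m q2 by (cases m) auto
    ultimately show "\<exists>A. optimum_CDA d 2 ((d + 1) * q ^ 2) (2 * q + 3) q A"
      using F.optimum_CDA_doubling[OF F(2,3)] F(4) q2 d by simp
  qed
qed

end
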